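(* If $R$ is a 2-primal ring, then $\beta(R)=\mathcal N(R)=E_R(0)=\beta_{co}(R)$.
   Context: Rings are associative with identity. $\beta(R)$ is the prime radical (intersection of all prime ideals), $\beta_{co}(R)$ the intersection of all completely prime ideals (an ideal $P$ is completely prime if $ab\in P$ implies $a\in P$ or $b\in P$), $\mathcal N(R)$ the set of nilpotent elements. $R$ is 2-primal if $\mathcal N(R)=\beta(R)$. $E_R(0)=\{ab: a,b\in R, a^kb=0\text{ for some }k\in\mathbb N\}$. *)

theory Defs
  imports Main
begin

text \<open>Rings: type class ring_1 (associative, with identity, not necessarily commutative).
  The ring R is the whole carrier UNIV of the type.\<close>

definition is_ideal :: "'a::ring_1 set \<Rightarrow> bool" where
  "is_ideal I \<longleftrightarrow> 0 \<in> I \<and> (\<forall>x\<in>I. \<forall>y\<in>I. x + y \<in> I) \<and> (\<forall>x\<in>I. - x \<in> I)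
     \<and> (\<forall>x\<in>I. \<forall>r. r * x \<in> I \<and> x * r \<in> I)"

text \<open>Prime ideal: proper ideal P such that for ideals A, B, AB \<subseteq> P implies A \<subseteq> P or B \<subseteq> P
  (AB \<subseteq> P unfolded as: all products a*b with a in A, b in B lie in P, since P is additively closed).\<close>
definition prime_ideal :: "'a::ring_1 set \<Rightarrow> bool" where
  "prime_ideal P \<longleftrightarrow> is_ideal P \<and> P \<noteq> UNIV \<and>
     (\<forall>A B. is_ideal A \<longrightarrow> is_ideal B \<longrightarrow> (\<forall>a\<in>A. \<forall>b\<in>B. a * b \<in> P) \<longrightarrow> A \<subseteq> P \<or> B \<subseteq> P)"

definition completely_prime_ideal :: "'a::ring_1 set \<Rightarrow> bool" where
  "completely_prime_ideal P \<longleftrightarrow> is_ideal P \<and> P \<noteq> UNIV \<and>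
     (\<forall>a b. a * b \<in> P \<longrightarrow> a \<in> P \<or> b \<in> P)"

definition prime_radical :: "'a::ring_1 set" where
  "prime_radical = \<Inter> {P. prime_ideal P}"

definition co_radical :: "'a::ring_1 set" where
  "co_radical = \<Inter> {P. completely_prime_ideal P}"

definition nilpotents :: "'a::ring_1 set" where
  "nilpotents = {x. \<exists>n::nat. x ^ n = 0}"

definition E_zero :: "'a::ring_1 set" where
  "E_zero = {a * b | a b. \<exists>k::nat. k \<ge> 1 \<and> a ^ k * b = 0}"

definition two_primal :: "'a::ring_1 itself \<Rightarrow> bool" where
  "two_primal _ \<longleftrightarrow> (nilpotents :: 'a set) = prime_radical"

end

theory Submission
  imports Defs
begin

text \<open>In any ring, nilpotents lie in E(0) (take b = 1), and E(0) lies in every completely prime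
  ideal (from a^k b = 0 either a or b is in it). Conversely, a completely semiprime ideal I
  (a^2 \<in> I implies a \<in> I) is the intersection of the completely prime ideals containing it:
  for x \<notin> I, an ideal maximal among the completely semiprime ideals containing I and avoiding x
  is completely prime, because its ideal quotients {y. c y \<in> P} are again completely semiprime.
  In a 2-primal ring the nilpotents form the prime radical, hence an ideal, and this ideal is
  completely semiprime, so it contains the intersection of all completely prime ideals.\<close>

definition completely_semiprime_ideal :: "'a::ring_1 set \<Rightarrow> bool" where
  "completely_semiprime_ideal I \<longleftrightarrow> is_ideal I \<and> (\<forall>a. a * a \<in> I \<longrightarrow> a \<in> I)"

lemma is_ideal_zero: "is_ideal I \<Longrightarrow> 0 \<in> I"
  and is_ideal_add: "is_ideal I \<Longrightarrow> x \<in> I \<Longrightarrow> y \<in> I \<Longrightarrow> x + y \<in> I"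
  and is_ideal_uminus: "is_ideal I \<Longrightarrow> x \<in> I \<Longrightarrow> - x \<in> I"
  and is_ideal_mult_left: "is_ideal I \<Longrightarrow> x \<in> I \<Longrightarrow> r * x \<in> I"
  and is_ideal_mult_right: "is_ideal I \<Longrightarrow> x \<in> I \<Longrightarrow> x * r \<in> I"
  unfolding is_ideal_def by blast+

lemma is_idealI:
  assumes "0 \<in> I" "\<And>x y. x \<in> I \<Longrightarrow> y \<in> I \<Longrightarrow> x + y \<in> I" "\<And>x. x \<in> I \<Longrightarrow> - x \<in> I"
    "\<And>x r. x \<in> I \<Longrightarrow> r * x \<in> I" "\<And>x r. x \<in> I \<Longrightarrow> x * r \<in> I"
  shows "is_ideal I"
  unfolding is_ideal_def by (intro conjI ballI allI assms)

lemma is_ideal_Inter: "(\<And>I. I \<in> S \<Longrightarrow> is_ideal I) \<Longrightarrow> is_ideal (\<Inter>S :: 'a::ring_1 set)"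
  by (intro is_idealI InterI)
    (blast intro: is_ideal_zero is_ideal_add is_ideal_uminus is_ideal_mult_left is_ideal_mult_right)+

lemma is_ideal_Union_chain:
  fixes C :: "'a::ring_1 set set"
  assumes "C \<noteq> {}" and ideal: "\<And>I. I \<in> C \<Longrightarrow> is_ideal I"
    and chain: "\<And>I J. I \<in> C \<Longrightarrow> J \<in> C \<Longrightarrow> I \<subseteq> J \<or> J \<subseteq> I"
  shows "is_ideal (\<Union>C)"
proof (rule is_idealI)
  fix x y assume "x \<in> \<Union>C" "y \<in> \<Union>C"
  then obtain I J where IJ: "I \<in> C" "J \<in> C" "x \<in> I" "y \<in> J" by blast
  from chain[OF IJ(1,2)] show "x + y \<in> \<Union>C"
  proof
    assume "I \<subseteq> J"
    with IJ have "x + y \<in> J" using is_ideal_add[OF ideal[OF IJ(2)]] by blast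
    with IJ show ?thesis by blast
  next
    assume "J \<subseteq> I"
    with IJ have "x + y \<in> I" using is_ideal_add[OF ideal[OF IJ(1)]] by blast
    with IJ show ?thesis by blast
  qed
next
  show "0 \<in> \<Union>C" using \<open>C \<noteq> {}\<close> is_ideal_zero[OF ideal] by blast
next
  fix x r assume "x \<in> \<Union>C"
  then obtain I where "I \<in> C" "x \<in> I" by blast
  then show "- x \<in> \<Union>C" "r * x \<in> \<Union>C" "x * r \<in> \<Union>C"
    using is_ideal_uminus[OF ideal] is_ideal_mult_left[OF ideal] is_ideal_mult_right[OF ideal]
    by blast+
qed

lemma completely_semiprime_idealD:
  "completely_semiprime_ideal I \<Longrightarrow> is_ideal I"
  "completely_semiprime_ideal I \<Longrightarrow> a * a \<in> I \<Longrightarrow> a \<in> I"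
  unfolding completely_semiprime_ideal_def by iprover+

lemma completely_semiprime_ideal_reverse:
  assumes I: "completely_semiprime_ideal I" and "a * b \<in> I"
  shows "b * a \<in> I"
proof -
  have idI: "is_ideal I" using I by (rule completely_semiprime_idealD)
  have "b * (a * b) * a \<in> I"
    by (rule is_ideal_mult_right[OF idI is_ideal_mult_left[OF idI assms(2)]])
  then have "(b * a) * (b * a) \<in> I" by (simp add: mult.assoc)
  with I show ?thesis by (rule completely_semiprime_idealD(2))
qed

lemma completely_semiprime_ideal_insert:
  assumes I: "completely_semiprime_ideal I" and "a * b \<in> I"
  shows "a * r * b \<in> I"
proof -
  have idI: "is_ideal I" using I by (rule completely_semiprime_idealD)
  have "b * a \<in> I" using assms by (rule completely_semiprime_ideal_reverse)
  then have "(a * r) * (b * a) * (r * b) \<in> I"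
    by (rule is_ideal_mult_right[OF idI is_ideal_mult_left[OF idI]])
  then have "(a * r * b) * (a * r * b) \<in> I" by (simp add: mult.assoc)
  with I show ?thesis by (rule completely_semiprime_idealD(2))
qed

lemma completely_semiprime_ideal_power:
  assumes I: "completely_semiprime_ideal I" and "x ^ n \<in> I" and "n \<ge> 1"
  shows "x \<in> I"
  using assms(2,3)
proof (induction n rule: less_induct)
  case (less n)
  show ?case
  proof (cases "n = 1")
    case True
    with less.prems show ?thesis by simp
  next
    case False
    with less.prems have "(n - 1) + (n - 1) = n + (n - 2)" by simp
    then have "x ^ (n - 1) * x ^ (n - 1) = x ^ n * x ^ (n - 2)"
      by (simp only: power_add [symmetric])
    also have "\<dots> \<in> I"
      using completely_semiprime_idealD(1)[OF I] less.prems(1) by (rule is_ideal_mult_right)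
    finally have "x ^ (n - 1) \<in> I" by (rule completely_semiprime_idealD(2)[OF I])
    with False less.prems show ?thesis using less.IH[of "n - 1"] by simp
  qed
qed

lemma completely_prime_imp_completely_semiprime:
  "completely_prime_ideal P \<Longrightarrow> completely_semiprime_ideal P"
  unfolding completely_prime_ideal_def completely_semiprime_ideal_def by blast

lemma completely_semiprime_ideal_quotient:
  assumes I: "completely_semiprime_ideal I"
  shows "completely_semiprime_ideal {y. c * y \<in> I}"
proof -
  have idI: "is_ideal I" using I by (rule completely_semiprime_idealD)
  have "is_ideal {y. c * y \<in> I}"
  proof (rule is_idealI)
    show "0 \<in> {y. c * y \<in> I}" using is_ideal_zero[OF idI] by simp
  next
    fix y z assume "y \<in> {y. c * y \<in> I}" "z \<in> {y. c * y \<in> I}"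
    then show "y + z \<in> {y. c * y \<in> I}" using is_ideal_add[OF idI] by (simp add: distrib_left)
  next
    fix y assume "y \<in> {y. c * y \<in> I}"
    then show "- y \<in> {y. c * y \<in> I}" using is_ideal_uminus[OF idI] by simp
  next
    fix y r assume "y \<in> {y. c * y \<in> I}"
    then show "r * y \<in> {y. c * y \<in> I}"
      using completely_semiprime_ideal_insert[OF I, of c y r] by (simp add: mult.assoc)
  next
    fix y r assume "y \<in> {y. c * y \<in> I}"
    then show "y * r \<in> {y. c * y \<in> I}"
      using is_ideal_mult_right[OF idI, of "c * y" r] by (simp add: mult.assoc)
  qed
  moreover have "a \<in> {y. c * y \<in> I}" if "a * a \<in> {y. c * y \<in> I}" for a
  proof -
    have "(c * a) * c * a \<in> I"
      using that completely_semiprime_ideal_insert[OF I, of "c * a" a c] by (simp add: mult.assoc)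
    then have "(c * a) * (c * a) \<in> I" by (simp add: mult.assoc)
    with I have "c * a \<in> I" by (rule completely_semiprime_idealD(2))
    then show ?thesis by simp
  qed
  ultimately show ?thesis unfolding completely_semiprime_ideal_def by blast
qed

text \<open>If a b \<in> P, either a x \<notin> P, and then the quotient {y. a y \<in> P} avoids x, so it equals P
  and contains b; or a x \<in> P, hence x a \<in> P, and then the quotient {y. x y \<in> P} avoids x
  (as x^2 \<notin> P), equals P and contains a.\<close>

lemma maximal_completely_semiprime_avoiding_imp_completely_prime:
  assumes P: "completely_semiprime_ideal P" and x: "x \<notin> P"
    and max: "\<And>J. completely_semiprime_ideal J \<Longrightarrow> x \<notin> J \<Longrightarrow> P \<subseteq> J \<Longrightarrow> J = P"
  shows "completely_prime_ideal P"
proof -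
  have quotient_eq: "{y. c * y \<in> P} = P" if "c * x \<notin> P" for c
  proof (rule max)
    show "completely_semiprime_ideal {y. c * y \<in> P}"
      using P by (rule completely_semiprime_ideal_quotient)
    show "x \<notin> {y. c * y \<in> P}" using that by simp
    show "P \<subseteq> {y. c * y \<in> P}"
      using is_ideal_mult_left[OF completely_semiprime_idealD(1)[OF P]] by blast
  qed
  have "a \<in> P \<or> b \<in> P" if ab: "a * b \<in> P" for a b
  proof (cases "a * x \<in> P")
    case False
    have "b \<in> {y. a * y \<in> P}" using ab by simp
    then show ?thesis unfolding quotient_eq[OF False] by simp
  next
    case True
    have "x * x \<notin> P" using x completely_semiprime_idealD(2)[OF P] by blast
    have "x * a \<in> P" using P True by (rule completely_semiprime_ideal_reverse)
    then have "a \<in> {y. x * y \<in> P}" by simp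
    then show ?thesis unfolding quotient_eq[OF \<open>x * x \<notin> P\<close>] by simp
  qed
  with P x show ?thesis
    unfolding completely_prime_ideal_def completely_semiprime_ideal_def by blast
qed

lemma completely_semiprime_ideal_avoiding_completely_prime:
  assumes I: "completely_semiprime_ideal I" and x: "x \<notin> I"
  obtains P where "completely_prime_ideal P" "I \<subseteq> P" "x \<notin> P"
proof -
  let ?S = "{J. completely_semiprime_ideal J \<and> I \<subseteq> J \<and> x \<notin> J}"
  have "\<Union>C \<in> ?S" if "C \<noteq> {}" "subset.chain ?S C" for C
  proof -
    have "C \<subseteq> ?S" and "\<And>J K. J \<in> C \<Longrightarrow> K \<in> C \<Longrightarrow> J \<subseteq> K \<or> K \<subseteq> J"
      using that(2) unfolding subset.chain_def by blast+
    then have "is_ideal (\<Union>C)"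
      using that(1) completely_semiprime_idealD(1) by (intro is_ideal_Union_chain) blast+
    with \<open>C \<subseteq> ?S\<close> \<open>C \<noteq> {}\<close> show ?thesis
      unfolding completely_semiprime_ideal_def by blast
  qed
  moreover have "?S \<noteq> {}" using I x by blast
  ultimately obtain P where "P \<in> ?S" and max: "\<forall>J\<in>?S. P \<subseteq> J \<longrightarrow> J = P"
    using subset_Zorn_nonempty[of ?S] by blast
  then have "completely_prime_ideal P"
    by (intro maximal_completely_semiprime_avoiding_imp_completely_prime) auto
  with \<open>P \<in> ?S\<close> show thesis using that by blast
qed

lemma co_radical_subset_completely_semiprime_ideal:
  "completely_semiprime_ideal I \<Longrightarrow> co_radical \<subseteq> I"
  unfolding co_radical_def
  by (blast elim: completely_semiprime_ideal_avoiding_completely_prime)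

lemma nilpotents_subset_E_zero: "nilpotents \<subseteq> (E_zero :: 'a::ring_1 set)"
proof
  fix x :: 'a
  assume "x \<in> nilpotents"
  then obtain n where "x ^ n = 0" unfolding nilpotents_def by blast
  then have "x ^ Suc n * 1 = 0" by simp
  then have "x * 1 \<in> E_zero" unfolding E_zero_def
    by (intro CollectI exI[of _ x] exI[of _ 1] conjI refl exI[of _ "Suc n"]) simp_all
  then show "x \<in> E_zero" by simp
qed

lemma E_zero_subset_co_radical: "E_zero \<subseteq> (co_radical :: 'a::ring_1 set)"
proof
  fix y :: 'a
  assume "y \<in> E_zero"
  then obtain a b k where y: "y = a * b" and "k \<ge> 1" and abk: "a ^ k * b = 0"
    unfolding E_zero_def by blast
  show "y \<in> co_radical" unfolding co_radical_def
  proof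
    fix P :: "'a set"
    assume "P \<in> {P. completely_prime_ideal P}"
    then have P: "completely_prime_ideal P" by simp
    then have idP: "is_ideal P" unfolding completely_prime_ideal_def by blast
    have "a ^ k * b \<in> P" using abk is_ideal_zero[OF idP] by simp
    then have "a ^ k \<in> P \<or> b \<in> P" using P unfolding completely_prime_ideal_def by blast
    then have "a \<in> P \<or> b \<in> P"
      using completely_semiprime_ideal_power[OF completely_prime_imp_completely_semiprime[OF P]]
        \<open>k \<ge> 1\<close> by blast
    then show "y \<in> P"
      unfolding y by (auto intro: is_ideal_mult_left[OF idP] is_ideal_mult_right[OF idP])
  qed
qed

lemma nilpotent_square_imp_nilpotent:
  assumes "a * a \<in> nilpotents"
  shows "a \<in> nilpotents"
proof -
  from assms obtain n where "(a * a) ^ n = 0" unfolding nilpotents_def by blast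
  then have "a ^ (2 * n) = 0" by (simp add: power_mult power2_eq_square)
  then show ?thesis unfolding nilpotents_def by blast
qed

lemma two_primal_completely_semiprime_nilpotents:
  assumes "two_primal TYPE('a::ring_1)"
  shows "completely_semiprime_ideal (nilpotents :: 'a set)"
proof -
  have "is_ideal (prime_radical :: 'a set)"
    unfolding prime_radical_def by (rule is_ideal_Inter) (simp add: prime_ideal_def)
  with assms have "is_ideal (nilpotents :: 'a set)" unfolding two_primal_def by simp
  then show ?thesis
    unfolding completely_semiprime_ideal_def using nilpotent_square_imp_nilpotent by blast
qed

theorem corollary4p5:
  assumes "two_primal TYPE('a::ring_1)"
  shows "(prime_radical :: 'a set) = nilpotents \<and> (nilpotents :: 'a set) = E_zero
         \<and> (E_zero :: 'a set) = co_radical"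
proof -
  have "co_radical \<subseteq> (nilpotents :: 'a set)"
    using assms by (intro co_radical_subset_completely_semiprime_ideal
        two_primal_completely_semiprime_nilpotents)
  with nilpotents_subset_E_zero E_zero_subset_co_radical
  have "(nilpotents :: 'a set) = E_zero" and "(E_zero :: 'a set) = co_radical" by blast+
  with assms show ?thesis unfolding two_primal_def by simp
qed

end
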